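(* Let $k\ge2$. For every nonzero $\xi\in\mathbb{R}^4$ the sequence $0\leftarrow\mathbb{C}^{k+1}\xleftarrow{D_0^{(k)}(\xi)^t}\mathbb{C}^{2k}\xleftarrow{D_1^{(k)}(\xi)^t}\mathbb{C}^{k-1}\leftarrow0$ is exact.
   Context: Put $a=\frac1i(\xi_0-i\xi_1)$, $\bar a'=\frac1i(\xi_0+i\xi_1)$, $b=\frac1i(\xi_2-i\xi_3)$, $\bar b'=\frac1i(\xi_2+i\xi_3)$. $D_0^{(k)}(\xi)$ is the $(2k)\times(k+1)$ matrix whose rows $2j$, $2j+1$ ($j=0,\dots,k-1$, rows/columns indexed from $0$) are: row $2j$ has entry $-\bar b'$ in column $j$ and $-\bar a'$ in column $j+1$; row $2j+1$ has entry $a$ in column $j$ and $-b$ in column $j+1$; all other entries $0$. $D_1^{(k)}(\xi)$ is the $(k-1)\times(2k)$ matrix whose row $j$ ($j=0,\dots,k-2$) has entries $-a,-\bar b',b,-\bar a'$ in columns $2j,2j+1,2j+2,2j+3$ and zeros elsewhere. (These are the symbols of the $k$-Cauchy–Fueter operators, obtained by replacing $\partial_{x_l}$ by $\frac1i\xi_l$.) $t$ denotes transpose; exactness means $D_0^{(k)}(\xi)^t$ is surjective, $D_1^{(k)}(\xi)^t$ injective, and $\operatorname{Im}D_1^{(k)}(\xi)^t=\ker D_0^{(k)}(\xi)^t$. *)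

theory Defs
  imports Complex_Main "Jordan_Normal_Form.Matrix"
begin

definition sym_a :: "real vec \<Rightarrow> complex" where
  "sym_a xi = (1 / \<i>) * (complex_of_real (xi $ 0) - \<i> * complex_of_real (xi $ 1))"
definition sym_a' :: "real vec \<Rightarrow> complex" where
  "sym_a' xi = (1 / \<i>) * (complex_of_real (xi $ 0) + \<i> * complex_of_real (xi $ 1))"
definition sym_b :: "real vec \<Rightarrow> complex" where
  "sym_b xi = (1 / \<i>) * (complex_of_real (xi $ 2) - \<i> * complex_of_real (xi $ 3))"
definition sym_b' :: "real vec \<Rightarrow> complex" where
  "sym_b' xi = (1 / \<i>) * (complex_of_real (xi $ 2) + \<i> * complex_of_real (xi $ 3))"

definition D0 :: "nat \<Rightarrow> real vec \<Rightarrow> complex mat" where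
  "D0 k xi = mat (2 * k) (k + 1) (\<lambda>(r, c).
     let j = r div 2 in
     if even r then
       (if c = j then - sym_b' xi else if c = j + 1 then - sym_a' xi else 0)
     else
       (if c = j then sym_a xi else if c = j + 1 then - sym_b xi else 0))"

definition D1 :: "nat \<Rightarrow> real vec \<Rightarrow> complex mat" where
  "D1 k xi = mat (k - 1) (2 * k) (\<lambda>(j, c).
     if c = 2 * j then - sym_a xi
     else if c = 2 * j + 1 then - sym_b' xi
     else if c = 2 * j + 2 then sym_b xi
     else if c = 2 * j + 3 then - sym_a' xi
     else 0)"

end

theory Submission
  imports Defs
begin

text \<open>Read \<open>x \<in> F^(2k)\<close> as \<open>k\<close> pairs \<open>(u_m, v_m) = (x_(2m), x_(2m+1))\<close> and map each pair to
  \<open>(p_m, q_m) = (a v_m - b' u_m, -(a' u_m + b v_m))\<close>. This block has determinant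
  \<open>N = a a' + b b'\<close>, which for the symbol of \<open>\<xi>\<close> equals \<open>-|\<xi>|^2 \<noteq> 0\<close>. In the coordinates
  \<open>(p, q)\<close> the map \<open>D_0^t\<close> becomes the shift \<open>(p_0, p_1 + q_0, ..., p_(k-1) + q_(k-2), q_(k-1))\<close>,
  and \<open>D_1^t z\<close> has coordinates \<open>p_m = -N z_(m-1)\<close>, \<open>q_m = N z_m\<close>; exactness of this shift
  complex is elementary.\<close>

lemma sum_even_odd_pairs:
  "(\<Sum>r = 0..<2 * (n::nat). f r) = (\<Sum>j = 0..<n. f (2 * j) + f (2 * j + 1))"
  by (induction n) (auto simp: numeral_2_eq_2 add.assoc)

context
  fixes a a' b b' :: "'a::field"
begin

definition fueter_mat0 :: "nat \<Rightarrow> 'a mat" where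
  "fueter_mat0 k = mat (2 * k) (k + 1) (\<lambda>(r, c).
     let j = r div 2 in
     if even r then (if c = j then - b' else if c = j + 1 then - a' else 0)
     else (if c = j then a else if c = j + 1 then - b else 0))"

definition fueter_mat1 :: "nat \<Rightarrow> 'a mat" where
  "fueter_mat1 k = mat (k - 1) (2 * k) (\<lambda>(j, c).
     if c = 2 * j then - a
     else if c = 2 * j + 1 then - b'
     else if c = 2 * j + 2 then b
     else if c = 2 * j + 3 then - a'
     else 0)"

definition pair_p :: "'a vec \<Rightarrow> nat \<Rightarrow> 'a" where
  "pair_p x m = a * x $ (2 * m + 1) - b' * x $ (2 * m)"

definition pair_q :: "'a vec \<Rightarrow> nat \<Rightarrow> 'a" where
  "pair_q x m = - (a' * x $ (2 * m) + b * x $ (2 * m + 1))"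

lemma fueter_mat0_transpose_mult_vec_nth:
  assumes "x \<in> carrier_vec (2 * k)" "c < k + 1"
  shows "(transpose_mat (fueter_mat0 k) *\<^sub>v x) $ c =
    (if c < k then pair_p x c else 0) + (if 0 < c then pair_q x (c - 1) else 0)"
proof -
  have "(transpose_mat (fueter_mat0 k) *\<^sub>v x) $ c
      = (\<Sum>r = 0..<2 * k. fueter_mat0 k $$ (r, c) * x $ r)"
    using assms by (simp add: fueter_mat0_def scalar_prod_def)
  also have "\<dots> = (\<Sum>j = 0..<k.
      fueter_mat0 k $$ (2 * j, c) * x $ (2 * j)
      + fueter_mat0 k $$ (2 * j + 1, c) * x $ (2 * j + 1))"
    by (rule sum_even_odd_pairs)
  also have "\<dots> = (\<Sum>j = 0..<k. (if j = c then pair_p x c else 0)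
      + (if j = c - 1 \<and> 0 < c then pair_q x (c - 1) else 0))"
    using assms(2)
    by (intro sum.cong) (auto simp: fueter_mat0_def pair_p_def pair_q_def algebra_simps)
  also have "\<dots> = (if c < k then pair_p x c else 0) + (if 0 < c then pair_q x (c - 1) else 0)"
    using assms(2) by (auto simp: sum.distrib)
  finally show ?thesis .
qed

lemma fueter_mat1_transpose_mult_vec_nth:
  assumes "z \<in> carrier_vec (k - 1)" "m < k"
  shows "(transpose_mat (fueter_mat1 k) *\<^sub>v z) $ (2 * m) =
      b * (if 0 < m then z $ (m - 1) else 0) - a * (if m < k - 1 then z $ m else 0)"
    and "(transpose_mat (fueter_mat1 k) *\<^sub>v z) $ (2 * m + 1) =
      - (a' * (if 0 < m then z $ (m - 1) else 0) + b' * (if m < k - 1 then z $ m else 0))"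
proof -
  have row: "(transpose_mat (fueter_mat1 k) *\<^sub>v z) $ r
      = (\<Sum>j = 0..<k - 1. fueter_mat1 k $$ (j, r) * z $ j)" if "r < 2 * k" for r
    using assms that by (simp add: fueter_mat1_def scalar_prod_def)
  have "(\<Sum>j = 0..<k - 1. fueter_mat1 k $$ (j, 2 * m) * z $ j)
      = (\<Sum>j = 0..<k - 1. (if j = m - 1 \<and> 0 < m then b * z $ (m - 1) else 0)
          - (if j = m then a * z $ m else 0))"
    using assms(2)
    by (intro sum.cong) (auto simp: fueter_mat1_def dest: arg_cong[where f = even])
  then show "(transpose_mat (fueter_mat1 k) *\<^sub>v z) $ (2 * m) =
      b * (if 0 < m then z $ (m - 1) else 0) - a * (if m < k - 1 then z $ m else 0)"
    using assms(2) by (auto simp: row sum_subtractf)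
  have "(\<Sum>j = 0..<k - 1. fueter_mat1 k $$ (j, 2 * m + 1) * z $ j)
      = (\<Sum>j = 0..<k - 1. - (if j = m - 1 \<and> 0 < m then a' * z $ (m - 1) else 0)
          - (if j = m then b' * z $ m else 0))"
    using assms(2)
    by (intro sum.cong) (auto simp: fueter_mat1_def dest: arg_cong[where f = even])
  with row[of "2 * m + 1"] assms(2)
  show "(transpose_mat (fueter_mat1 k) *\<^sub>v z) $ (2 * m + 1) =
      - (a' * (if 0 < m then z $ (m - 1) else 0) + b' * (if m < k - 1 then z $ m else 0))"
    by (auto simp: sum_subtractf sum_negf)
qed

lemma pair_p_q_recover:
  "(a * a' + b * b') * x $ (2 * m) = - (b * pair_p x m + a * pair_q x m)"
  "(a * a' + b * b') * x $ (2 * m + 1) = a' * pair_p x m - b' * pair_q x m"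
  by (simp_all add: pair_p_def pair_q_def algebra_simps)

lemma eq_vec_if_pair_p_q_eq:
  assumes "a * a' + b * b' \<noteq> 0" "x \<in> carrier_vec (2 * k)" "x' \<in> carrier_vec (2 * k)"
    and "\<And>m. m < k \<Longrightarrow> pair_p x m = pair_p x' m \<and> pair_q x m = pair_q x' m"
  shows "x = x'"
proof (rule eq_vecI)
  fix r assume "r < dim_vec x'"
  then have "r div 2 < k" using assms(3) by auto
  with assms(4) pair_p_q_recover
  have "(a * a' + b * b') * x $ (2 * (r div 2)) = (a * a' + b * b') * x' $ (2 * (r div 2))"
    and "(a * a' + b * b') * x $ (2 * (r div 2) + 1)
      = (a * a' + b * b') * x' $ (2 * (r div 2) + 1)"
    by metis+
  with assms(1) show "x $ r = x' $ r"
    by (cases "even r") simp_all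
qed (use assms in auto)

lemma exists_vec_pair_p_q:
  assumes "a * a' + b * b' \<noteq> 0"
  obtains x where "x \<in> carrier_vec (2 * k)"
    and "\<And>m. m < k \<Longrightarrow> pair_p x m = p m" "\<And>m. m < k \<Longrightarrow> pair_q x m = q m"
proof
  let ?c = "inverse (a * a' + b * b')"
  let ?x = "vec (2 * k) (\<lambda>r. if even r then - ?c * (b * p (r div 2) + a * q (r div 2))
                             else ?c * (a' * p (r div 2) - b' * q (r div 2)))"
  show "?x \<in> carrier_vec (2 * k)" by simp
  fix m assume "m < k"
  then have "pair_p ?x m = ?c * (a * a' + b * b') * p m"
    and "pair_q ?x m = ?c * (a * a' + b * b') * q m"
    by (simp_all add: pair_p_def pair_q_def algebra_simps)
  with assms show "pair_p ?x m = p m" "pair_q ?x m = q m" by simp_all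
qed

lemma pair_p_q_fueter_mat1_transpose:
  assumes "z \<in> carrier_vec (k - 1)" "m < k"
  shows "pair_p (transpose_mat (fueter_mat1 k) *\<^sub>v z) m
           = - ((a * a' + b * b') * (if 0 < m then z $ (m - 1) else 0))"
    and "pair_q (transpose_mat (fueter_mat1 k) *\<^sub>v z) m
           = (a * a' + b * b') * (if m < k - 1 then z $ m else 0)"
proof -
  have p: "a * (- (a' * u + b' * v)) - b' * (b * u - a * v) = - ((a * a' + b * b') * u)"
    and q: "- (a' * (b * u - a * v) + b * (- (a' * u + b' * v))) = (a * a' + b * b') * v"
    for u v :: 'a
    by (simp_all add: algebra_simps)
  show "pair_p (transpose_mat (fueter_mat1 k) *\<^sub>v z) m
      = - ((a * a' + b * b') * (if 0 < m then z $ (m - 1) else 0))"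
    unfolding pair_p_def fueter_mat1_transpose_mult_vec_nth[OF assms] by (rule p)
  show "pair_q (transpose_mat (fueter_mat1 k) *\<^sub>v z) m
      = (a * a' + b * b') * (if m < k - 1 then z $ m else 0)"
    unfolding pair_q_def fueter_mat1_transpose_mult_vec_nth[OF assms] by (rule q)
qed

lemma fueter_mat1_transpose_carrier:
  "transpose_mat (fueter_mat1 k) *\<^sub>v z \<in> carrier_vec (2 * k)"
  by (rule carrier_vecI) (simp add: fueter_mat1_def)

lemma fueter_mat0_transpose_surj:
  assumes "a * a' + b * b' \<noteq> 0" "0 < k" "y \<in> carrier_vec (k + 1)"
  shows "\<exists>x \<in> carrier_vec (2 * k). transpose_mat (fueter_mat0 k) *\<^sub>v x = y"
proof -
  obtain x where x: "x \<in> carrier_vec (2 * k)" "\<And>m. m < k \<Longrightarrow> pair_p x m = y $ m"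
    "\<And>m. m < k \<Longrightarrow> pair_q x m = (if m = k - 1 then y $ k else 0)"
    using exists_vec_pair_p_q[OF assms(1), where k = k and p = "\<lambda>m. y $ m"
        and q = "\<lambda>m. if m = k - 1 then y $ k else 0"] by blast
  have "transpose_mat (fueter_mat0 k) *\<^sub>v x = y"
  proof (rule eq_vecI)
    fix c assume "c < dim_vec y"
    with assms(2,3) x show "(transpose_mat (fueter_mat0 k) *\<^sub>v x) $ c = y $ c"
      by (cases "c = k") (auto simp: fueter_mat0_transpose_mult_vec_nth)
  qed (use assms(3) in \<open>simp add: fueter_mat0_def\<close>)
  with x(1) show ?thesis by blast
qed

lemma fueter_mat1_transpose_inj:
  assumes "a * a' + b * b' \<noteq> 0" "z \<in> carrier_vec (k - 1)"
    and "transpose_mat (fueter_mat1 k) *\<^sub>v z = 0\<^sub>v (2 * k)"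
  shows "z = 0\<^sub>v (k - 1)"
proof (rule eq_vecI)
  fix j assume "j < dim_vec (0\<^sub>v (k - 1) :: 'a vec)"
  then have "j < k - 1" by simp
  moreover have "pair_q (transpose_mat (fueter_mat1 k) *\<^sub>v z) j = 0"
    using \<open>j < k - 1\<close> by (simp add: assms(3) pair_q_def)
  ultimately show "z $ j = 0\<^sub>v (k - 1) $ j"
    using assms(1) pair_p_q_fueter_mat1_transpose(2)[OF assms(2), of j] by simp
qed (use assms(2) in simp)

lemma fueter_mat0_transpose_mult_fueter_mat1_transpose:
  assumes "z \<in> carrier_vec (k - 1)"
  shows "transpose_mat (fueter_mat0 k) *\<^sub>v (transpose_mat (fueter_mat1 k) *\<^sub>v z) = 0\<^sub>v (k + 1)"
proof (rule eq_vecI)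
  fix c assume "c < dim_vec (0\<^sub>v (k + 1) :: 'a vec)"
  then show "(transpose_mat (fueter_mat0 k) *\<^sub>v (transpose_mat (fueter_mat1 k) *\<^sub>v z)) $ c
      = 0\<^sub>v (k + 1) $ c"
    by (auto simp: fueter_mat0_transpose_mult_vec_nth[OF fueter_mat1_transpose_carrier]
        pair_p_q_fueter_mat1_transpose[OF assms])
qed (simp add: fueter_mat0_def)

lemma fueter_mat0_transpose_kernel_subset_image:
  assumes "a * a' + b * b' \<noteq> 0" "x \<in> carrier_vec (2 * k)"
    and "transpose_mat (fueter_mat0 k) *\<^sub>v x = 0\<^sub>v (k + 1)"
  shows "\<exists>z \<in> carrier_vec (k - 1). transpose_mat (fueter_mat1 k) *\<^sub>v z = x"
proof
  let ?z = "vec (k - 1) (\<lambda>m. pair_q x m / (a * a' + b * b'))"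
  have kernel: "(if c < k then pair_p x c else 0) + (if 0 < c then pair_q x (c - 1) else 0) = 0"
    if "c < k + 1" for c
    using fueter_mat0_transpose_mult_vec_nth[OF assms(2) that] assms(3) that by simp
  show "?z \<in> carrier_vec (k - 1)" by simp
  show "transpose_mat (fueter_mat1 k) *\<^sub>v ?z = x"
  proof (rule eq_vec_if_pair_p_q_eq[OF assms(1) fueter_mat1_transpose_carrier assms(2)])
    fix m assume "m < k"
    have "pair_p x m = - (if 0 < m then pair_q x (m - 1) else 0)"
      using kernel[of m] \<open>m < k\<close> by (simp add: eq_neg_iff_add_eq_0)
    moreover have "pair_q x m = 0" if "\<not> m < k - 1"
    proof -
      from that \<open>m < k\<close> have "m = k - 1" by simp
      with kernel[of k] \<open>m < k\<close> show ?thesis by simp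
    qed
    ultimately show "pair_p (transpose_mat (fueter_mat1 k) *\<^sub>v ?z) m = pair_p x m
        \<and> pair_q (transpose_mat (fueter_mat1 k) *\<^sub>v ?z) m = pair_q x m"
      using \<open>m < k\<close> assms(1)
      by (cases "m < k - 1") (auto simp: pair_p_q_fueter_mat1_transpose)
  qed
qed

end

lemma D0_eq_fueter_mat0: "D0 k xi = fueter_mat0 (sym_a xi) (sym_a' xi) (sym_b xi) (sym_b' xi) k"
  by (simp add: D0_def fueter_mat0_def)

lemma D1_eq_fueter_mat1: "D1 k xi = fueter_mat1 (sym_a xi) (sym_a' xi) (sym_b xi) (sym_b' xi) k"
  by (simp add: D1_def fueter_mat1_def)

lemma sym_a_sym_a'_plus_sym_b_sym_b':
  "sym_a xi * sym_a' xi + sym_b xi * sym_b' xi = - of_real (\<Sum>j<4. (xi $ j)\<^sup>2)"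
  by (simp add: sym_a_def sym_a'_def sym_b_def sym_b'_def numeral_eq_Suc field_simps
      power2_eq_square)

lemma sym_nondegenerate:
  assumes "xi \<in> carrier_vec 4" "xi \<noteq> 0\<^sub>v 4"
  shows "sym_a xi * sym_a' xi + sym_b xi * sym_b' xi \<noteq> 0"
proof -
  have "xi \<noteq> 0\<^sub>v 4 \<Longrightarrow> \<exists>i < 4. xi $ i \<noteq> 0"
    using assms(1) by (metis carrier_vecD eq_vecI index_zero_vec(1,2))
  with assms(2) obtain i where "i < 4" "xi $ i \<noteq> 0" by blast
  then have "0 < (\<Sum>j<4. (xi $ j)\<^sup>2)"
    by (intro sum_pos2[where i = i]) auto
  then show ?thesis
    unfolding sym_a_sym_a'_plus_sym_b_sym_b' by (simp del: of_real_sum)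
qed

theorem lemma4p1:
  fixes k :: nat and xi :: "real vec"
  assumes "k \<ge> 2"
    and "xi \<in> carrier_vec 4" and "xi \<noteq> 0\<^sub>v 4"
  shows "(\<forall>y \<in> carrier_vec (k + 1). \<exists>x \<in> carrier_vec (2 * k).
            transpose_mat (D0 k xi) *\<^sub>v x = y)
       \<and> (\<forall>z \<in> carrier_vec (k - 1).
            transpose_mat (D1 k xi) *\<^sub>v z = 0\<^sub>v (2 * k) \<longrightarrow> z = 0\<^sub>v (k - 1))
       \<and> {transpose_mat (D1 k xi) *\<^sub>v z | z. z \<in> carrier_vec (k - 1)}
         = {x \<in> carrier_vec (2 * k). transpose_mat (D0 k xi) *\<^sub>v x = 0\<^sub>v (k + 1)}"
proof -
  have nondeg: "sym_a xi * sym_a' xi + sym_b xi * sym_b' xi \<noteq> 0"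
    using assms(2,3) by (rule sym_nondegenerate)
  have "0 < k" using assms(1) by simp
  show ?thesis
    unfolding D0_eq_fueter_mat0 D1_eq_fueter_mat1
    using fueter_mat0_transpose_surj[OF nondeg \<open>0 < k\<close>] fueter_mat1_transpose_inj[OF nondeg]
      fueter_mat0_transpose_kernel_subset_image[OF nondeg]
      fueter_mat0_transpose_mult_fueter_mat1_transpose fueter_mat1_transpose_carrier
    by blast
qed

end
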